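(* Let \(G=(V,E)\) be a connected graph with spanning tree \(T\). Let \(G_i\) be an induced subgraph of \(G\) such that the restriction \(T_i\) of \(T\) to \(V(G_i)\) is a spanning tree of \(G_i\). If \(T\) is the \(\mathcal{L}\)-tree of an LDFS ordering of \(G\), then \(T_i\) is the \(\mathcal{L}\)-tree of an LDFS ordering of \(G_i\). In particular, if \(T\) is the \(\mathcal{L}\)-tree of an LDFS ordering of \(G\) starting at \(r\in V\) and \(r\in V(G_i)\), then \(T_i\) is the \(\mathcal{L}\)-tree of an LDFS ordering of \(G_i\) starting at \(r\).
   Context: An LDFS ordering of a connected graph is any vertex ordering \((v_1,\dots,v_n)\) produced as follows for some start vertex \(s\) (then \(v_1=s\)) and some tie-breaking: give \(s\) the label \((0)\) and every other vertex the empty label; for \(i=1,\dots,n\), pick an unnumbered vertex with lexicographically largest label, set it as \(v_i\), and prepend \(i\) to the label of every unnumbered neighbor of it. The \(\mathcal{L}\)-tree of an ordering \((v_1,\dots,v_n)\) is the tree containing, for each \(i\ge2\), the edge from \(v_i\) to its rightmost neighbor \(v_j\) with \(j<i\). The restriction of \(T\) to a vertex set \(S\) is the subgraph of \(T\) induced by \(S\). *)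

theory Defs
  imports Main
begin

definition graph :: "'a set \<Rightarrow> 'a set set \<Rightarrow> bool" where
  "graph V E \<longleftrightarrow> finite V \<and> (\<forall>e\<in>E. \<exists>u v. u \<noteq> v \<and> e = {u, v} \<and> u \<in> V \<and> v \<in> V)"

definition adj :: "'a set set \<Rightarrow> 'a \<Rightarrow> 'a \<Rightarrow> bool" where
  "adj E u v \<longleftrightarrow> {u, v} \<in> E"

definition connected_graph :: "'a set \<Rightarrow> 'a set set \<Rightarrow> bool" where
  "connected_graph V E \<longleftrightarrow> graph V E \<and> V \<noteq> {} \<and>
     (\<forall>u\<in>V. \<forall>v\<in>V. (u, v) \<in> {(x, y). adj E x y}\<^sup>*)"

definition acyclic_graph :: "'a set \<Rightarrow> 'a set set \<Rightarrow> bool" where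
  "acyclic_graph V E \<longleftrightarrow> \<not> (\<exists>cs. length cs \<ge> 3 \<and> distinct cs \<and> set cs \<subseteq> V \<and>
      (\<forall>i<length cs. {cs ! i, cs ! ((i + 1) mod length cs)} \<in> E))"

definition is_tree :: "'a set \<Rightarrow> 'a set set \<Rightarrow> bool" where
  "is_tree V T \<longleftrightarrow> connected_graph V T \<and> acyclic_graph V T"

definition spanning_tree :: "'a set \<Rightarrow> 'a set set \<Rightarrow> 'a set set \<Rightarrow> bool" where
  "spanning_tree V E T \<longleftrightarrow> T \<subseteq> E \<and> is_tree V T"

text \<open>Edge set of the subgraph induced by S (also used for the restriction of a tree to S).\<close>
definition induced :: "'a set set \<Rightarrow> 'a set \<Rightarrow> 'a set set" where
  "induced E S = {e \<in> E. e \<subseteq> S}"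

text \<open>Label of vertex w just before step i (1-based) of the LDFS process for the ordering vs
  (v_j = vs ! (j-1)): the numbers j < i of earlier numbered neighbours, most recent first,
  followed by the initial entry 0 if w is the start vertex s.\<close>
definition ldfs_label :: "'a set set \<Rightarrow> 'a \<Rightarrow> 'a list \<Rightarrow> nat \<Rightarrow> 'a \<Rightarrow> nat list" where
  "ldfs_label E s vs i w =
     rev (filter (\<lambda>j. adj E (vs ! (j - 1)) w) [1..<i]) @ (if w = s then [0] else [])"

definition lex_less :: "nat list \<Rightarrow> nat list \<Rightarrow> bool" where
  "lex_less xs ys \<longleftrightarrow> (xs, ys) \<in> lexord {(a, b). a < b}"

definition ldfs_ordering :: "'a set \<Rightarrow> 'a set set \<Rightarrow> 'a \<Rightarrow> 'a list \<Rightarrow> bool" where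
  "ldfs_ordering V E s vs \<longleftrightarrow> s \<in> V \<and> distinct vs \<and> set vs = V \<and> vs \<noteq> [] \<and> hd vs = s \<and>
     (\<forall>i\<in>{1..length vs}. \<forall>w\<in>V - set (take (i - 1) vs).
         \<not> lex_less (ldfs_label E s vs i (vs ! (i - 1))) (ldfs_label E s vs i w))"

text \<open>The L-tree: for each position i \<ge> 2 (0-based i > 0), the edge to the rightmost earlier neighbour.\<close>
definition L_tree :: "'a set set \<Rightarrow> 'a list \<Rightarrow> 'a set set" where
  "L_tree E vs = {{vs ! i, vs ! j} | i j. 0 < i \<and> i < length vs \<and> j < i \<and> adj E (vs ! j) (vs ! i) \<and>
       (\<forall>k. j < k \<and> k < i \<longrightarrow> \<not> adj E (vs ! k) (vs ! i))}"

end

(*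
  An ordering is an LDFS ordering iff it satisfies the four-point condition: whenever
  a < b < c, ac is an edge and ab is not, some d with a < d < b is adjacent to b but not to c.
  Its L-tree is normal: an earlier neighbour u of v is an ancestor of v.  Otherwise some
  ancestor y of v after u has no neighbour in [u, y), yet the four-point condition for
  u, y, v produces one.

  Restrict the ordering to S.  Any L-tree edge leaving the subtree of a vertex d joins d to
  its L-parent, so if T[S] is connected and S meets both the subtree of d and its outside,
  then d and its L-parent lie in S.  For a triple a < b < c in S, the four-point witness d
  is an ancestor of b later than a, hence in S; and for v in S with an earlier neighbour
  in S, the L-parent of v is in S and is then also its L-parent in the restriction.
*)
theory Submission
  imports Defs
begin

lemma rtrancl_leaves_set:
  assumes "(u, v) \<in> r\<^sup>*" "u \<in> D" "v \<notin> D"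
  obtains x z where "x \<in> D" "z \<notin> D" "(x, z) \<in> r"
proof -
  have "u \<in> D \<Longrightarrow> v \<in> D \<or> (\<exists>x z. x \<in> D \<and> z \<notin> D \<and> (x, z) \<in> r)"
    using assms(1) by (induction rule: rtrancl_induct) auto
  then show ?thesis using assms that by blast
qed

lemma adj_induced: "adj (induced E S) x y \<longleftrightarrow> adj E x y \<and> x \<in> S \<and> y \<in> S"
  unfolding adj_def induced_def by auto

lemma obtain_last_below:
  fixes a b :: nat
  assumes "a < b" "P a"
  obtains x where "a \<le> x" "x < b" "P x" "\<And>y. x < y \<Longrightarrow> y < b \<Longrightarrow> \<not> P y"
proof -
  define M where "M = {x. a \<le> x \<and> x < b \<and> P x}"
  have "finite M" "a \<in> M" unfolding M_def using assms by auto
  then have "Max M \<in> M" and below_Max: "\<And>y. y \<in> M \<Longrightarrow> y \<le> Max M"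
    using Max_in[OF \<open>finite M\<close>] Max_ge[OF \<open>finite M\<close>] by blast+
  moreover have "\<not> P y" if "Max M < y" "y < b" for y
  proof
    assume "P y"
    then have "y \<in> M" using that \<open>Max M \<in> M\<close> unfolding M_def by auto
    then show False using below_Max[of y] that(1) by simp
  qed
  ultimately show ?thesis using that unfolding M_def by blast
qed

lemma lexord_filter_desc_iff:
  fixes L :: "nat list"
  assumes "sorted_wrt (>) L"
  shows "(filter P L, filter Q L) \<in> lexord {(a, b). a < b} \<longleftrightarrow>
         (\<exists>x\<in>set L. \<not> P x \<and> Q x \<and> (\<forall>y\<in>set L. x < y \<longrightarrow> P y = Q y))"
  using assms
proof (induction L)
  case Nil
  then show ?case by simp
next
  case (Cons x L)
  then have smaller: "\<forall>y\<in>set L. y < x" and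
    IH: "(filter P L, filter Q L) \<in> lexord {(a, b). a < b} \<longleftrightarrow>
         (\<exists>x\<in>set L. \<not> P x \<and> Q x \<and> (\<forall>y\<in>set L. x < y \<longrightarrow> P y = Q y))"
    by simp_all
  show ?case
  proof (cases "P x"; cases "Q x")
    assume "P x" "\<not> Q x"
    moreover have "(x # filter P L, filter Q L) \<notin> lexord {(a, b). a < b}"
      using smaller filter_is_subset[of Q L] by (cases "filter Q L") auto
    ultimately show ?thesis using smaller by auto
  next
    assume "\<not> P x" "Q x"
    moreover have "(filter P L, x # filter Q L) \<in> lexord {(a, b). a < b}"
      using smaller filter_is_subset[of P L] by (cases "filter P L") auto
    ultimately show ?thesis using smaller by auto
  qed (use IH smaller in auto)
qed

lemma lex_less_ldfs_label_iff:
  assumes "w \<noteq> s" "w' \<noteq> s"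
  shows "lex_less (ldfs_label E s vs (Suc b) w) (ldfs_label E s vs (Suc b) w') \<longleftrightarrow>
    (\<exists>x<b. \<not> adj E (vs ! x) w \<and> adj E (vs ! x) w' \<and>
       (\<forall>y. x < y \<and> y < b \<longrightarrow> adj E (vs ! y) w = adj E (vs ! y) w'))"
    (is "_ \<longleftrightarrow> (\<exists>x<b. ?differ x)")
proof -
  define L where "L = rev [1..<Suc b]"
  define P where "P u j \<longleftrightarrow> adj E (vs ! (j - 1)) u" for u j
  have "ldfs_label E s vs (Suc b) u = filter (P u) L" if "u \<noteq> s" for u
    using that unfolding ldfs_label_def L_def P_def by (simp add: rev_filter)
  moreover have "sorted_wrt (>) L" "set L = {1..b}"
    unfolding L_def by (auto simp: sorted_wrt_rev simp del: upt_Suc)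
  ultimately have "lex_less (ldfs_label E s vs (Suc b) w) (ldfs_label E s vs (Suc b) w') \<longleftrightarrow>
      (\<exists>x\<in>{1..b}. \<not> P w x \<and> P w' x \<and> (\<forall>y\<in>{1..b}. x < y \<longrightarrow> P w y = P w' y))"
    using assms lexord_filter_desc_iff[of L "P w" "P w'"] unfolding lex_less_def by simp
  also have "\<dots> \<longleftrightarrow> (\<exists>x<b. ?differ x)"
  proof
    assume "\<exists>x\<in>{1..b}. \<not> P w x \<and> P w' x \<and> (\<forall>y\<in>{1..b}. x < y \<longrightarrow> P w y = P w' y)"
    then obtain x1 where x1: "x1 \<in> {1..b}" "\<not> P w x1" "P w' x1"
      and above: "\<forall>y\<in>{1..b}. x1 < y \<longrightarrow> P w y = P w' y"
      by blast
    then obtain x where "x1 = Suc x" by (cases x1) auto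
    with x1 have x: "Suc x \<in> {1..b}" "\<not> P w (Suc x)" "P w' (Suc x)" by auto
    have "adj E (vs ! y) w = adj E (vs ! y) w'" if "x < y" "y < b" for y
      using above[rule_format, of "Suc y"] that \<open>x1 = Suc x\<close> unfolding P_def by simp
    with x show "\<exists>x<b. ?differ x" unfolding P_def by (intro exI[of _ x]) auto
  next
    assume "\<exists>x<b. ?differ x"
    then obtain x where x: "x < b" "?differ x" by blast
    have "P w y = P w' y" if "y \<in> {1..b}" "Suc x < y" for y
    proof -
      have "x < y - 1" "y - 1 < b" using that by auto
      then show ?thesis using x(2) unfolding P_def by blast
    qed
    with x show "\<exists>x\<in>{1..b}. \<not> P w x \<and> P w' x \<and> (\<forall>y\<in>{1..b}. x < y \<longrightarrow> P w y = P w' y)"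
      unfolding P_def by (intro bexI[of _ "Suc x"]) auto
  qed
  finally show ?thesis .
qed

definition precedes :: "'a list \<Rightarrow> 'a \<Rightarrow> 'a \<Rightarrow> bool" where
  "precedes xs x y \<longleftrightarrow> (\<exists>i j. i < j \<and> j < length xs \<and> xs ! i = x \<and> xs ! j = y)"

lemma precedes_Cons:
  "precedes (z # xs) x y \<longleftrightarrow> x = z \<and> y \<in> set xs \<or> precedes xs x y"
proof
  assume "precedes (z # xs) x y"
  then obtain i j where "i < j" "j < length (z # xs)" "(z # xs) ! i = x" "(z # xs) ! j = y"
    unfolding precedes_def by blast
  then show "x = z \<and> y \<in> set xs \<or> precedes xs x y"
    unfolding precedes_def by (cases i; cases j) auto
next
  assume "x = z \<and> y \<in> set xs \<or> precedes xs x y"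
  then show "precedes (z # xs) x y"
  proof
    assume "x = z \<and> y \<in> set xs"
    then obtain j where "j < length xs" "xs ! j = y" "x = z" by (auto simp: in_set_conv_nth)
    then show ?thesis unfolding precedes_def by (intro exI[of _ 0] exI[of _ "Suc j"]) auto
  next
    assume "precedes xs x y"
    then obtain i j where "i < j" "j < length xs" "xs ! i = x" "xs ! j = y"
      unfolding precedes_def by blast
    then show ?thesis unfolding precedes_def by (intro exI[of _ "Suc i"] exI[of _ "Suc j"]) auto
  qed
qed

lemma precedes_in_set: "precedes xs x y \<Longrightarrow> x \<in> set xs \<and> y \<in> set xs"
  unfolding precedes_def by auto

lemma precedes_filter: "precedes (filter P xs) x y \<longleftrightarrow> P x \<and> P y \<and> precedes xs x y"
  by (induction xs) (auto simp: precedes_Cons dest: precedes_in_set)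

lemma precedes_total:
  assumes "x \<in> set xs" "y \<in> set xs" "x \<noteq> y"
  shows "precedes xs x y \<or> precedes xs y x"
proof -
  obtain i j where "i < length xs" "xs ! i = x" "j < length xs" "xs ! j = y"
    using assms(1,2) by (auto simp: in_set_conv_nth)
  then show ?thesis using assms(3) unfolding precedes_def by (metis linorder_neqE_nat)
qed

context
  fixes xs :: "'a list"
  assumes dist: "distinct xs"
begin

lemma precedes_nth_iff:
  assumes "i < length xs" "j < length xs"
  shows "precedes xs (xs ! i) (xs ! j) \<longleftrightarrow> i < j"
  unfolding precedes_def using assms dist by (auto simp: nth_eq_iff_index_eq)

lemma precedes_irrefl: "\<not> precedes xs x x"
  unfolding precedes_def using dist by (metis less_not_refl nth_eq_iff_index_eq order.strict_trans)

lemma precedes_trans: "precedes xs x y \<Longrightarrow> precedes xs y z \<Longrightarrow> precedes xs x z"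
  unfolding precedes_def using dist by (metis nth_eq_iff_index_eq order.strict_trans)

lemma precedes_asym: "precedes xs x y \<Longrightarrow> \<not> precedes xs y x"
  using precedes_irrefl precedes_trans by blast

lemma wf_precedes: "wf {(x, y). precedes xs x y}"
proof (rule finite_acyclic_wf)
  show "finite {(x, y). precedes xs x y}"
    by (rule finite_subset[of _ "set xs \<times> set xs"]) (auto dest: precedes_in_set)
  have "trans {(x, y). precedes xs x y}"
    by (auto intro: transI precedes_trans)
  then show "acyclic {(x, y). precedes xs x y}"
    unfolding acyclic_def by (simp add: trancl_id precedes_irrefl)
qed

end

definition ldfs_four_point :: "'a set set \<Rightarrow> 'a list \<Rightarrow> bool" where
  "ldfs_four_point E vs \<longleftrightarrow>
     (\<forall>a b c. precedes vs a b \<longrightarrow> precedes vs b c \<longrightarrow> adj E a c \<longrightarrow> \<not> adj E a b \<longrightarrow>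
        (\<exists>d. precedes vs a d \<and> precedes vs d b \<and> adj E d b \<and> \<not> adj E d c))"

lemma ldfs_ordering_step:
  assumes "ldfs_ordering V E s vs" "b \<le> c" "c < length vs"
  shows "\<not> lex_less (ldfs_label E s vs (Suc b) (vs ! b)) (ldfs_label E s vs (Suc b) (vs ! c))"
proof -
  have "distinct vs" "set vs = V" using assms(1) unfolding ldfs_ordering_def by auto
  then have "vs ! c \<in> V - set (take b vs)"
    using assms(2,3) by (auto simp: in_set_conv_nth nth_eq_iff_index_eq)
  moreover have "Suc b \<in> {1..length vs}" using assms(2,3) by simp
  ultimately show ?thesis using assms(1) unfolding ldfs_ordering_def by fastforce
qed

lemma ldfs_ordering_four_point:
  assumes ldfs: "ldfs_ordering V E s vs"
  shows "ldfs_four_point E vs"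
  unfolding ldfs_four_point_def
proof (intro allI impI)
  fix a b c
  assume ab: "precedes vs a b" and bc: "precedes vs b c" and ac: "adj E a c" and "\<not> adj E a b"
  have dist: "distinct vs" and s: "s = vs ! 0"
    using ldfs unfolding ldfs_ordering_def by (auto simp: hd_conv_nth)
  obtain ia ib ic where idx: "ia < length vs" "ib < length vs" "ic < length vs"
    and abc: "a = vs ! ia" "b = vs ! ib" "c = vs ! ic"
    using precedes_in_set[OF ab] precedes_in_set[OF bc] by (auto simp: in_set_conv_nth)
  with ab bc have "ia < ib" "ib < ic" by (simp_all add: precedes_nth_iff[OF dist])
  have "adj E (vs ! ia) b \<noteq> adj E (vs ! ia) c" using ac \<open>\<not> adj E a b\<close> abc by simp
  then obtain x where x: "ia \<le> x" "x < ib" "adj E (vs ! x) b \<noteq> adj E (vs ! x) c"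
    and agree: "\<And>y. x < y \<Longrightarrow> y < ib \<Longrightarrow> adj E (vs ! y) b = adj E (vs ! y) c"
    by (rule obtain_last_below[OF \<open>ia < ib\<close>]) auto
  have "0 < length vs" using idx by linarith
  then have "b \<noteq> s" "c \<noteq> s"
    using \<open>ia < ib\<close> \<open>ib < ic\<close> idx abc s nth_eq_iff_index_eq[OF dist] by auto
  have "\<not> lex_less (ldfs_label E s vs (Suc ib) b) (ldfs_label E s vs (Suc ib) c)"
    using ldfs_ordering_step[OF ldfs, of ib ic] \<open>ib < ic\<close> idx abc by simp
  then have "adj E (vs ! x) b" "\<not> adj E (vs ! x) c"
    using x agree lex_less_ldfs_label_iff[OF \<open>b \<noteq> s\<close> \<open>c \<noteq> s\<close>] by blast+
  moreover have "ia < x" using x \<open>adj E (vs ! x) b\<close> \<open>\<not> adj E a b\<close> abc by (auto simp: le_less)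
  ultimately show "\<exists>d. precedes vs a d \<and> precedes vs d b \<and> adj E d b \<and> \<not> adj E d c"
    using idx abc x by (intro exI[of _ "vs ! x"]) (simp add: precedes_nth_iff[OF dist])
qed

lemma four_point_ldfs_step:
  assumes dist: "distinct vs" and "hd vs = s" and four_point: "ldfs_four_point E vs"
    and "b \<le> c" "c < length vs"
  shows "\<not> lex_less (ldfs_label E s vs (Suc b) (vs ! b)) (ldfs_label E s vs (Suc b) (vs ! c))"
proof -
  have "vs \<noteq> []" using assms(5) by auto
  then have "0 < length vs" and s: "s = vs ! 0" using assms(2) by (auto simp: hd_conv_nth)
  then have not_s: "vs ! k \<noteq> s" if "0 < k" "k < length vs" for k
    using that nth_eq_iff_index_eq[OF dist] by auto
  consider "b = c" | "b = 0" "b < c" | "0 < b" "b < c"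
    using \<open>b \<le> c\<close> by linarith
  then show ?thesis
  proof cases
    case 1
    then show ?thesis unfolding lex_less_def by (simp add: lexord_irreflexive)
  next
    case 2
    then show ?thesis using not_s[of c] assms(5) s unfolding lex_less_def ldfs_label_def by simp
  next
    case 3
    show ?thesis
    proof
      assume "lex_less (ldfs_label E s vs (Suc b) (vs ! b)) (ldfs_label E s vs (Suc b) (vs ! c))"
      moreover have "vs ! b \<noteq> s" "vs ! c \<noteq> s" using not_s 3 assms(5) by auto
      ultimately obtain x where "x < b" and x: "\<not> adj E (vs ! x) (vs ! b)" "adj E (vs ! x) (vs ! c)"
        and agree: "\<forall>y. x < y \<and> y < b \<longrightarrow> adj E (vs ! y) (vs ! b) = adj E (vs ! y) (vs ! c)"
        using lex_less_ldfs_label_iff[of "vs ! b" s "vs ! c"] by auto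
      have "precedes vs (vs ! x) (vs ! b)" "precedes vs (vs ! b) (vs ! c)"
        using \<open>x < b\<close> 3 assms(5) by (simp_all add: precedes_nth_iff[OF dist])
      then obtain d where d: "precedes vs (vs ! x) d" "precedes vs d (vs ! b)"
        "adj E d (vs ! b)" "\<not> adj E d (vs ! c)"
        using four_point x unfolding ldfs_four_point_def by blast
      then obtain k where "k < length vs" "d = vs ! k"
        using precedes_in_set[OF d(1)] by (auto simp: in_set_conv_nth)
      then have "x < k" "k < b"
        using d(1,2) \<open>x < b\<close> 3 assms(5) by (simp_all add: precedes_nth_iff[OF dist])
      then show False using agree d(3,4) \<open>d = vs ! k\<close> by blast
    qed
  qed
qed

lemma ldfs_ordering_iff_four_point:
  "ldfs_ordering V E s vs \<longleftrightarrow>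
     distinct vs \<and> set vs = V \<and> vs \<noteq> [] \<and> hd vs = s \<and> ldfs_four_point E vs"
proof
  assume ldfs: "ldfs_ordering V E s vs"
  then have "distinct vs" "set vs = V" "vs \<noteq> []" "hd vs = s"
    unfolding ldfs_ordering_def by auto
  with ldfs_ordering_four_point[OF ldfs]
  show "distinct vs \<and> set vs = V \<and> vs \<noteq> [] \<and> hd vs = s \<and> ldfs_four_point E vs" by simp
next
  assume vs: "distinct vs \<and> set vs = V \<and> vs \<noteq> [] \<and> hd vs = s \<and> ldfs_four_point E vs"
  show "ldfs_ordering V E s vs"
    unfolding ldfs_ordering_def
  proof (intro conjI ballI)
    fix i w
    assume "i \<in> {1..length vs}" and w: "w \<in> V - set (take (i - 1) vs)"
    then obtain b where i: "i = Suc b" by (cases i) auto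
    obtain c where c: "c < length vs" "w = vs ! c"
      using w vs by (auto simp: in_set_conv_nth)
    have "b \<le> c"
    proof (rule ccontr)
      assume "\<not> b \<le> c"
      then have "w \<in> set (take b vs)" using c by (auto simp: in_set_conv_nth)
      then show False using w i by simp
    qed
    then show "\<not> lex_less (ldfs_label E s vs i (vs ! (i - 1))) (ldfs_label E s vs i w)"
      using four_point_ldfs_step[of vs s E b c] vs c i by simp
  qed (use vs in auto)
qed

definition L_parent :: "'a set set \<Rightarrow> 'a list \<Rightarrow> 'a \<Rightarrow> 'a \<Rightarrow> bool" where
  "L_parent E vs u v \<longleftrightarrow> precedes vs u v \<and> adj E u v \<and>
     (\<forall>w. precedes vs u w \<longrightarrow> precedes vs w v \<longrightarrow> \<not> adj E w v)"

definition L_ancestor :: "'a set set \<Rightarrow> 'a list \<Rightarrow> ('a \<times> 'a) set" where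
  "L_ancestor E vs = {(u, v). L_parent E vs u v}\<^sup>*"

lemma L_parent_filter:
  assumes "L_parent E vs u v" "u \<in> S" "v \<in> S"
  shows "L_parent (induced E S) (filter (\<lambda>x. x \<in> S) vs) u v"
  using assms unfolding L_parent_def by (auto simp: precedes_filter adj_induced)

context
  fixes E :: "'a set set" and vs :: "'a list"
  assumes dist: "distinct vs"
begin

lemma L_tree_eq: "L_tree E vs = {{u, v} | u v. L_parent E vs u v}"
proof (intro set_eqI iffI)
  fix e
  assume "e \<in> L_tree E vs"
  then obtain i j where e: "e = {vs ! i, vs ! j}" and ij: "j < i" "i < length vs"
    and "adj E (vs ! j) (vs ! i)"
    and none_between: "\<forall>k. j < k \<and> k < i \<longrightarrow> \<not> adj E (vs ! k) (vs ! i)"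
    unfolding L_tree_def by blast
  have "\<not> adj E w (vs ! i)" if between: "precedes vs (vs ! j) w" "precedes vs w (vs ! i)" for w
  proof -
    obtain k where k: "k < length vs" "w = vs ! k"
      using precedes_in_set[OF between(1)] by (auto simp: in_set_conv_nth)
    then have "j < k" "k < i"
      using between ij precedes_nth_iff[OF dist] by auto
    then show ?thesis using none_between k by blast
  qed
  moreover have "precedes vs (vs ! j) (vs ! i)"
    using ij precedes_nth_iff[OF dist] by auto
  ultimately have "L_parent E vs (vs ! j) (vs ! i)"
    unfolding L_parent_def using \<open>adj E (vs ! j) (vs ! i)\<close> by blast
  moreover have "e = {vs ! j, vs ! i}" using e by (simp add: insert_commute)
  ultimately show "e \<in> {{u, v} | u v. L_parent E vs u v}" by blast
next
  fix e
  assume "e \<in> {{u, v} | u v. L_parent E vs u v}"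
  then obtain u v where e: "e = {u, v}" and uv: "L_parent E vs u v" by blast
  then obtain i j where ij: "j < i" "i < length vs" "u = vs ! j" "v = vs ! i"
    unfolding L_parent_def precedes_def by blast
  have "\<not> adj E (vs ! k) (vs ! i)" if "j < k" "k < i" for k
    using uv that ij precedes_nth_iff[OF dist] unfolding L_parent_def by auto
  moreover have "e = {vs ! i, vs ! j}" using e ij by (simp add: insert_commute)
  ultimately show "e \<in> L_tree E vs"
    using uv ij unfolding L_tree_def L_parent_def by (intro CollectI exI[of _ i] exI[of _ j]) auto
qed

lemma L_parent_unique:
  assumes "L_parent E vs u v" "L_parent E vs u' v"
  shows "u = u'"
proof (rule ccontr)
  assume "u \<noteq> u'"
  moreover have "u \<in> set vs" "u' \<in> set vs"
    using assms precedes_in_set unfolding L_parent_def by metis+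
  ultimately have "precedes vs u u' \<or> precedes vs u' u" by (rule precedes_total[rotated 2])
  then show False using assms unfolding L_parent_def by blast
qed

lemma L_parent_exists:
  assumes "precedes vs u v" "adj E u v"
  obtains p where "L_parent E vs p v" "p = u \<or> precedes vs u p"
proof -
  obtain i j where ij: "j < i" "i < length vs" "u = vs ! j" "v = vs ! i"
    using assms(1) unfolding precedes_def by blast
  from assms(2) ij(3) have "adj E (vs ! j) v" by simp
  then obtain m where m: "j \<le> m" "m < i" "adj E (vs ! m) v"
    and none_after: "\<And>k. m < k \<Longrightarrow> k < i \<Longrightarrow> \<not> adj E (vs ! k) v"
    by (rule obtain_last_below[OF \<open>j < i\<close>]) blast
  have "L_parent E vs (vs ! m) v"
    unfolding L_parent_def
  proof (intro conjI allI impI)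
    show "precedes vs (vs ! m) v" "adj E (vs ! m) v"
      using m ij by (simp_all add: precedes_nth_iff[OF dist])
    fix w
    assume "precedes vs (vs ! m) w" "precedes vs w v"
    moreover obtain k where "k < length vs" "w = vs ! k"
      using precedes_in_set[OF calculation(1)] by (auto simp: in_set_conv_nth)
    ultimately show "\<not> adj E w v"
      using none_after m ij by (simp add: precedes_nth_iff[OF dist])
  qed
  moreover have "vs ! m = u \<or> precedes vs u (vs ! m)"
    using m ij precedes_nth_iff[OF dist, of j m] by (cases "j = m") auto
  ultimately show ?thesis using that by blast
qed

lemma L_ancestor_precedes:
  assumes "(u, v) \<in> L_ancestor E vs"
  shows "u = v \<or> precedes vs u v"
  using assms unfolding L_ancestor_def
proof (induction rule: rtrancl_induct)
  case (step v w)
  then show ?case unfolding L_parent_def using precedes_trans[OF dist] by auto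
qed simp

lemma L_ancestor_or_gap:
  assumes "w = k \<or> precedes vs w k"
  shows "(w, k) \<in> L_ancestor E vs \<or>
    (\<exists>y. (y, k) \<in> L_ancestor E vs \<and> precedes vs w y \<and>
       (\<forall>x. (x = w \<or> precedes vs w x) \<longrightarrow> precedes vs x y \<longrightarrow> \<not> adj E x y))"
  using assms
proof (induction k rule: wf_induct_rule[OF wf_precedes[OF dist]])
  case (1 k)
  show ?case
  proof (cases "w = k")
    case False
    with "1.prems" have "precedes vs w k" by simp
    show ?thesis
    proof (cases "\<exists>x. (x = w \<or> precedes vs w x) \<and> precedes vs x k \<and> adj E x k")
      case True
      then obtain x where x: "x = w \<or> precedes vs w x" "precedes vs x k" "adj E x k" by blast
      then obtain p where "L_parent E vs p k" "p = x \<or> precedes vs x p"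
        using L_parent_exists by blast
      with x(1) have "w = p \<or> precedes vs w p" "precedes vs p k" "(p, k) \<in> L_ancestor E vs"
        using precedes_trans[OF dist] unfolding L_ancestor_def L_parent_def by auto
      with "1.IH"[of p] show ?thesis
        unfolding L_ancestor_def by (blast intro: rtrancl_trans)
    next
      case False
      then show ?thesis
        using \<open>precedes vs w k\<close> unfolding L_ancestor_def by blast
    qed
  qed (simp add: L_ancestor_def)
qed

lemma adj_precedes_L_ancestor:
  assumes four_point: "ldfs_four_point E vs" and "precedes vs u v" "adj E u v"
  shows "(u, v) \<in> L_ancestor E vs"
proof -
  obtain p where p: "L_parent E vs p v" "p = u \<or> precedes vs u p"
    using L_parent_exists assms(2,3) by blast
  then have pv: "(p, v) \<in> L_ancestor E vs" unfolding L_ancestor_def by blast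
  from p(2) have "u = p \<or> precedes vs u p" by auto
  from L_ancestor_or_gap[OF this] show ?thesis
  proof (elim disjE exE conjE)
    assume "(u, p) \<in> L_ancestor E vs"
    then show ?thesis using pv unfolding L_ancestor_def by simp
  next
    fix y
    assume "(y, p) \<in> L_ancestor E vs" "precedes vs u y"
      and gap: "\<forall>x. (x = u \<or> precedes vs u x) \<longrightarrow> precedes vs x y \<longrightarrow> \<not> adj E x y"
    have "precedes vs y v"
      using L_ancestor_precedes[OF \<open>(y, p) \<in> L_ancestor E vs\<close>] p(1) precedes_trans[OF dist]
      unfolding L_parent_def by blast
    then obtain d where "precedes vs u d" "precedes vs d y" "adj E d y"
      using four_point \<open>precedes vs u y\<close> \<open>adj E u v\<close> gap unfolding ldfs_four_point_def by blast
    then show ?thesis using gap by blast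
  qed
qed

lemma L_tree_edge_leaving_subtree:
  assumes "(d, x) \<in> L_ancestor E vs" "(d, z) \<notin> L_ancestor E vs" "{x, z} \<in> L_tree E vs"
  shows "x = d \<and> L_parent E vs z d"
proof -
  have "L_parent E vs x z \<or> L_parent E vs z x"
    using assms(3) unfolding L_tree_eq by (auto simp: doubleton_eq_iff)
  moreover have "\<not> L_parent E vs x z"
  proof
    assume "L_parent E vs x z"
    then have "(d, z) \<in> L_ancestor E vs"
      using assms(1) unfolding L_ancestor_def by (simp add: rtrancl.rtrancl_into_rtrancl)
    then show False using assms(2) by contradiction
  qed
  moreover have "x = d" if "L_parent E vs z x"
  proof (rule ccontr)
    assume "x \<noteq> d"
    then obtain w where "(d, w) \<in> L_ancestor E vs" "L_parent E vs w x"
      using assms(1) unfolding L_ancestor_def by (auto elim: rtranclE)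
    then show False
      using L_parent_unique[OF that] assms(2) by blast
  qed
  ultimately show ?thesis by blast
qed

lemma restricted_L_tree_parent:
  assumes "connected_graph S (induced (L_tree E vs) S)"
    and "(d, u) \<in> L_ancestor E vs" "u \<in> S" "y \<in> S" "(d, y) \<notin> L_ancestor E vs"
  shows "d \<in> S" "\<exists>z\<in>S. L_parent E vs z d"
proof -
  define subtree where "subtree = {w. (d, w) \<in> L_ancestor E vs}"
  have "(u, y) \<in> {(x, z). adj (induced (L_tree E vs) S) x z}\<^sup>*"
    using assms(1,3,4) unfolding connected_graph_def by blast
  moreover have "u \<in> subtree" "y \<notin> subtree" using assms(2,5) unfolding subtree_def by auto
  ultimately obtain x z where "x \<in> subtree" "z \<notin> subtree"
    and xz: "adj (induced (L_tree E vs) S) x z"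
    by (rule rtrancl_leaves_set) auto
  then have "(d, x) \<in> L_ancestor E vs" "(d, z) \<notin> L_ancestor E vs"
    unfolding subtree_def by auto
  from xz have "{x, z} \<in> L_tree E vs" "x \<in> S" "z \<in> S"
    unfolding adj_def induced_def by auto
  then show "d \<in> S" "\<exists>z\<in>S. L_parent E vs z d"
    using L_tree_edge_leaving_subtree[OF \<open>(d, x) \<in> _\<close> \<open>(d, z) \<notin> _\<close>] by auto
qed

end

context
  fixes E :: "'a set set" and \<sigma> :: "'a list" and S :: "'a set"
  assumes dist: "distinct \<sigma>"
    and connected: "connected_graph S (induced (L_tree E \<sigma>) S)"
begin

lemma ldfs_four_point_filter:
  assumes four_point: "ldfs_four_point E \<sigma>"
  shows "ldfs_four_point (induced E S) (filter (\<lambda>x. x \<in> S) \<sigma>)"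
  unfolding ldfs_four_point_def
proof (intro allI impI)
  fix a b c
  assume "precedes (filter (\<lambda>x. x \<in> S) \<sigma>) a b" "precedes (filter (\<lambda>x. x \<in> S) \<sigma>) b c"
    "adj (induced E S) a c" "\<not> adj (induced E S) a b"
  then have "a \<in> S" "b \<in> S" "c \<in> S" "precedes \<sigma> a b" "precedes \<sigma> b c" "adj E a c" "\<not> adj E a b"
    by (auto simp: precedes_filter adj_induced)
  then obtain d where d: "precedes \<sigma> a d" "precedes \<sigma> d b" "adj E d b" "\<not> adj E d c"
    using four_point unfolding ldfs_four_point_def by blast
  have "(d, b) \<in> L_ancestor E \<sigma>"
    using adj_precedes_L_ancestor[OF dist four_point d(2,3)] .
  moreover have "(d, a) \<notin> L_ancestor E \<sigma>"
    using L_ancestor_precedes[OF dist] d(1) precedes_asym[OF dist] precedes_irrefl[OF dist] by blast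
  ultimately have "d \<in> S"
    using restricted_L_tree_parent(1)[OF dist connected _ \<open>b \<in> S\<close> \<open>a \<in> S\<close>] by blast
  then show "\<exists>d. precedes (filter (\<lambda>x. x \<in> S) \<sigma>) a d \<and> precedes (filter (\<lambda>x. x \<in> S) \<sigma>) d b \<and>
      adj (induced E S) d b \<and> \<not> adj (induced E S) d c"
    using d \<open>a \<in> S\<close> \<open>b \<in> S\<close> by (auto simp: precedes_filter adj_induced)
qed

lemma L_tree_filter:
  "induced (L_tree E \<sigma>) S = L_tree (induced E S) (filter (\<lambda>x. x \<in> S) \<sigma>)"
proof -
  let ?\<tau> = "filter (\<lambda>x. x \<in> S) \<sigma>"
  have parent: "L_parent E \<sigma> u v" if "L_parent (induced E S) ?\<tau> u v" for u v
  proof -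
    have "u \<in> S" "v \<in> S" "precedes \<sigma> u v"
      using that unfolding L_parent_def by (simp_all add: precedes_filter)
    moreover have "(v, u) \<notin> L_ancestor E \<sigma>"
      using L_ancestor_precedes[OF dist] \<open>precedes \<sigma> u v\<close> precedes_asym[OF dist] precedes_irrefl[OF dist]
      by blast
    ultimately obtain z where "z \<in> S" "L_parent E \<sigma> z v"
      using restricted_L_tree_parent(2)[OF dist connected, of v v u] unfolding L_ancestor_def by blast
    moreover have "z = u"
      using L_parent_unique[OF distinct_filter[OF dist] L_parent_filter[OF \<open>L_parent E \<sigma> z v\<close>] that]
        \<open>z \<in> S\<close> \<open>v \<in> S\<close> by blast
    ultimately show ?thesis by simp
  qed
  have in_S: "u \<in> S" "v \<in> S" if "L_parent (induced E S) ?\<tau> u v" for u v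
    using that unfolding L_parent_def by (simp_all add: precedes_filter)
  show ?thesis
    unfolding L_tree_eq[OF dist] L_tree_eq[OF distinct_filter[OF dist]]
  proof (intro set_eqI iffI)
    fix e
    assume "e \<in> induced {{u, v} | u v. L_parent E \<sigma> u v} S"
    then obtain u v where "e = {u, v}" "L_parent E \<sigma> u v" "u \<in> S" "v \<in> S"
      unfolding induced_def by auto
    then show "e \<in> {{u, v} | u v. L_parent (induced E S) ?\<tau> u v}"
      unfolding mem_Collect_eq using L_parent_filter by (intro exI[of _ u] exI[of _ v] conjI) simp_all
  next
    fix e
    assume "e \<in> {{u, v} | u v. L_parent (induced E S) ?\<tau> u v}"
    then obtain u v where e: "e = {u, v}" and uv: "L_parent (induced E S) ?\<tau> u v" by auto
    have "{u, v} \<in> {{u, v} | u v. L_parent E \<sigma> u v}"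
      using parent[OF uv] unfolding mem_Collect_eq by (intro exI[of _ u] exI[of _ v] conjI refl)
    then show "e \<in> induced {{u, v} | u v. L_parent E \<sigma> u v} S"
      using in_S[OF uv] e unfolding induced_def by simp
  qed
qed

end

theorem lemma5:
  fixes V S :: "'a set" and E T :: "'a set set" and r :: 'a and \<sigma> :: "'a list"
  assumes "connected_graph V E"
    and "spanning_tree V E T"
    and "S \<subseteq> V"
    and "spanning_tree S (induced E S) (induced T S)"
    and "ldfs_ordering V E r \<sigma>"
    and "T = L_tree E \<sigma>"
  shows "(\<exists>r' \<sigma>'. ldfs_ordering S (induced E S) r' \<sigma>' \<and> induced T S = L_tree (induced E S) \<sigma>')
       \<and> (r \<in> S \<longrightarrow> (\<exists>\<sigma>'. ldfs_ordering S (induced E S) r \<sigma>' \<and> induced T S = L_tree (induced E S) \<sigma>'))"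
proof -
  define \<tau> where "\<tau> = filter (\<lambda>x. x \<in> S) \<sigma>"
  have \<sigma>: "distinct \<sigma>" "set \<sigma> = V" "\<sigma> \<noteq> []" "hd \<sigma> = r" "ldfs_four_point E \<sigma>"
    using assms(5) unfolding ldfs_ordering_iff_four_point by auto
  have connected: "connected_graph S (induced (L_tree E \<sigma>) S)"
    using assms(4,6) unfolding spanning_tree_def is_tree_def by blast
  have "set \<tau> = S" using assms(3) \<sigma>(2) unfolding \<tau>_def by auto
  moreover have "\<tau> \<noteq> []" using connected calculation unfolding connected_graph_def by auto
  moreover have "ldfs_four_point (induced E S) \<tau>"
    using ldfs_four_point_filter[OF \<sigma>(1) connected \<sigma>(5)] unfolding \<tau>_def .
  ultimately have "ldfs_ordering S (induced E S) (hd \<tau>) \<tau>"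
    using distinct_filter[OF \<sigma>(1)] unfolding ldfs_ordering_iff_four_point \<tau>_def by simp
  moreover have "induced T S = L_tree (induced E S) \<tau>"
    using L_tree_filter[OF \<sigma>(1) connected] assms(6) unfolding \<tau>_def by simp
  moreover have "hd \<tau> = r" if "r \<in> S"
    using that \<sigma>(3,4) unfolding \<tau>_def by (cases \<sigma>) auto
  ultimately show ?thesis by blast
qed

end
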